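(* For all integers $n,m\ge 2$, the number $a(n,m,\Gamma_{gs})$ of group-separable $(n,m)$-elections on the candidate set $\{c_1,\ldots,c_m\}$ satisfies $a(n,m,\Gamma_{gs})\le m!\cdot(3+2\sqrt 2)^{m(n-1)}$.
   Context: An $(n,m)$-election $(C,\mathcal{P})$ is a set $C$ of $m$ candidates with an ordered $n$-tuple $\mathcal{P}=(V_1,\ldots,V_n)$ of total orders (votes) on $C$. The election is group-separable if for every subset $C'\subseteq C$ with $|C'|\ge 2$ there exists a partition of $C'$ into two nonempty sets $C_1,C_2$ such that in every vote either all candidates of $C_1$ are ranked above all candidates of $C_2$, or all candidates of $C_2$ are ranked above all candidates of $C_1$. *)

theory Defs
  imports Complex_Main
begin

(* A vote (total order on a finite candidate set C) is represented as a ranking list: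
   a list v with distinct v and set v = C; earlier position = ranked higher. *)
definition is_vote :: "'a set \<Rightarrow> 'a list \<Rightarrow> bool" where
  "is_vote C v \<longleftrightarrow> distinct v \<and> set v = C"

definition ranks_above :: "'a list \<Rightarrow> 'a \<Rightarrow> 'a \<Rightarrow> bool" where
  "ranks_above v a b \<longleftrightarrow> (\<exists>i j. i < j \<and> j < length v \<and> v ! i = a \<and> v ! j = b)"

definition is_election :: "'a set \<Rightarrow> nat \<Rightarrow> 'a list list \<Rightarrow> bool" where
  "is_election C n P \<longleftrightarrow> length P = n \<and> (\<forall>v\<in>set P. is_vote C v)"

definition group_separable :: "'a set \<Rightarrow> 'a list list \<Rightarrow> bool" where
  "group_separable C P \<longleftrightarrow>
     (\<forall>C'. C' \<subseteq> C \<and> card C' \<ge> 2 \<longrightarrow>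
        (\<exists>C1 C2. C1 \<noteq> {} \<and> C2 \<noteq> {} \<and> C1 \<inter> C2 = {} \<and> C1 \<union> C2 = C' \<and>
           (\<forall>v\<in>set P. (\<forall>a\<in>C1. \<forall>b\<in>C2. ranks_above v a b) \<or>
                        (\<forall>a\<in>C1. \<forall>b\<in>C2. ranks_above v b a))))"

definition num_gs_elections :: "nat \<Rightarrow> nat \<Rightarrow> nat" where
  "num_gs_elections n m =
     card {P. is_election {1..m} n P \<and> group_separable {1..m} P}"

end

theory Submission
  imports Defs "HOL-Combinatorics.Multiset_Permutations"
begin

text \<open>Fix the first vote \<open>u\<close>. Every other vote \<open>w\<close> forms a group-separable pair with \<open>u\<close>,
  so there are at most \<open>m! p(m)\<^sup>n\<^sup>-\<^sup>1\<close> elections, where \<open>p(m)\<close> bounds the number of such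
  partners \<open>w\<close>. If \<open>w\<close> begins with the same block of \<open>k\<close> candidates as \<open>u\<close> (\<open>0 < k < m\<close>),
  splitting at the least such \<open>k\<close> writes \<open>w\<close> as an indecomposable partner on the first \<open>k\<close>
  candidates followed by a partner on the others; otherwise the top-level split of the pair shows
  that \<open>rev w\<close> does. Hence \<open>p\<close> satisfies the recursion of the Schroeder numbers, whose
  generating function has radius of convergence \<open>3 - 2 \<surd>2\<close>; so \<open>p(m) \<le> (3 + 2 \<surd>2)\<^sup>m\<close>.\<close>

lemma ranks_above_rev: "ranks_above (rev v) a b \<longleftrightarrow> ranks_above v b a"
proof
  assume "ranks_above (rev v) a b"
  then obtain i j where "i < j" "j < length v" "rev v ! i = a" "rev v ! j = b"
    by (auto simp: ranks_above_def)
  then show "ranks_above v b a" unfolding ranks_above_def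
    by (intro exI[of _ "length v - 1 - j"] exI[of _ "length v - 1 - i"]) (auto simp: rev_nth)
next
  assume "ranks_above v b a"
  then obtain i j where "i < j" "j < length v" "v ! i = b" "v ! j = a"
    by (auto simp: ranks_above_def)
  then show "ranks_above (rev v) a b" unfolding ranks_above_def
    by (intro exI[of _ "length v - 1 - j"] exI[of _ "length v - 1 - i"]) (auto simp: rev_nth)
qed

lemma ranks_above_append_left:
  assumes "distinct (xs @ ys)" "a \<in> set xs" "b \<in> set xs"
  shows "ranks_above (xs @ ys) a b \<longleftrightarrow> ranks_above xs a b"
proof
  assume "ranks_above (xs @ ys) a b"
  then obtain i j where ij: "i < j" "j < length (xs @ ys)" "(xs @ ys) ! i = a" "(xs @ ys) ! j = b"
    by (auto simp: ranks_above_def)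
  obtain j' where j': "j' < length xs" "xs ! j' = b"
    using assms(3) by (auto simp: in_set_conv_nth)
  then have "(xs @ ys) ! j' = b" "j' < length (xs @ ys)" by (simp_all add: nth_append)
  then have "j = j'" using nth_eq_iff_index_eq[OF assms(1) ij(2)] ij(4) by metis
  then show "ranks_above xs a b" unfolding ranks_above_def
    using ij j' by (intro exI[of _ i] exI[of _ j]) (auto simp: nth_append)
next
  assume "ranks_above xs a b"
  then obtain i j where "i < j" "j < length xs" "xs ! i = a" "xs ! j = b"
    by (auto simp: ranks_above_def)
  then show "ranks_above (xs @ ys) a b" unfolding ranks_above_def
    by (intro exI[of _ i] exI[of _ j]) (auto simp: nth_append)
qed

lemma ranks_above_append_right:
  assumes "distinct (xs @ ys)" "a \<in> set ys" "b \<in> set ys"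
  shows "ranks_above (xs @ ys) a b \<longleftrightarrow> ranks_above ys a b"
proof -
  have "ranks_above (xs @ ys) a b \<longleftrightarrow> ranks_above (rev ys @ rev xs) b a"
    using ranks_above_rev[of "xs @ ys" b a] by simp
  also have "\<dots> \<longleftrightarrow> ranks_above (rev ys) b a"
    using assms by (intro ranks_above_append_left) auto
  finally show ?thesis by (simp add: ranks_above_rev)
qed

lemma ranks_above_asym:
  assumes "distinct v" "ranks_above v a b"
  shows "\<not> ranks_above v b a"
proof
  assume "ranks_above v b a"
  then obtain i j where ij: "i < j" "j < length v" "v ! i = b" "v ! j = a"
    by (auto simp: ranks_above_def)
  obtain i' j' where ij': "i' < j'" "j' < length v" "v ! i' = a" "v ! j' = b"
    using assms(2) by (auto simp: ranks_above_def)
  have "i = j'" "j = i'" using ij ij' assms(1) by (auto simp: nth_eq_iff_index_eq)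
  then show False using ij ij' by simp
qed

lemma ranks_above_append_Cons:
  assumes "a \<in> set ys"
  shows "ranks_above (xs @ b # ys) b a"
proof -
  obtain j where "j < length ys" "ys ! j = a" using assms by (auto simp: in_set_conv_nth)
  then show ?thesis unfolding ranks_above_def
    by (intro exI[of _ "length xs"] exI[of _ "length xs + Suc j"]) (auto simp: nth_append)
qed

lemma set_take_card_eq:
  assumes "distinct v" "set v = A \<union> B" "A \<inter> B = {}"
    and above: "\<forall>a\<in>A. \<forall>b\<in>B. ranks_above v a b"
  shows "set (take (card A) v) = A"
proof -
  let ?P = "\<lambda>x. x \<in> A"
  have "A \<subseteq> set (takeWhile ?P v)"
  proof
    fix a assume a: "a \<in> A"
    show "a \<in> set (takeWhile ?P v)"
    proof (rule ccontr)
      assume "a \<notin> set (takeWhile ?P v)"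
      then have "a \<in> set (dropWhile ?P v)"
        using a assms(2) takeWhile_dropWhile_id[of ?P v] by (metis UnCI Un_iff set_append)
      then obtain b rest where split: "dropWhile ?P v = b # rest"
        by (cases "dropWhile ?P v") auto
      have "b \<notin> A" using hd_dropWhile[of ?P v] split by simp
      moreover have "b \<in> set v" using set_dropWhileD[of b ?P v] split by simp
      ultimately have "b \<in> B" using assms(2) by auto
      moreover have "a \<in> set rest" using \<open>a \<in> set (dropWhile ?P v)\<close> split a \<open>b \<notin> A\<close> by auto
      then have "ranks_above v b a"
        using split takeWhile_dropWhile_id[of ?P v] by (metis ranks_above_append_Cons)
      ultimately show False using ranks_above_asym[OF assms(1)] above a by blast
    qed
  qed
  then have block: "set (takeWhile ?P v) = A" by (auto dest: set_takeWhileD)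
  then have "length (takeWhile ?P v) = card A"
    using assms(1) by (metis distinct_card distinct_takeWhile)
  then show ?thesis using block takeWhile_eq_take[of ?P v] by simp
qed

definition separates :: "'a list \<Rightarrow> 'a set \<Rightarrow> 'a set \<Rightarrow> bool" where
  "separates v A B \<longleftrightarrow>
     (\<forall>a\<in>A. \<forall>b\<in>B. ranks_above v a b) \<or> (\<forall>a\<in>A. \<forall>b\<in>B. ranks_above v b a)"

definition bipartition :: "'a set \<Rightarrow> 'a set \<Rightarrow> 'a set \<Rightarrow> bool" where
  "bipartition C A B \<longleftrightarrow> A \<noteq> {} \<and> B \<noteq> {} \<and> A \<inter> B = {} \<and> A \<union> B = C"

lemma group_separable_iff:
  "group_separable C P \<longleftrightarrow>
     (\<forall>C'. C' \<subseteq> C \<and> 2 \<le> card C' \<longrightarrow>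
        (\<exists>A B. bipartition C' A B \<and> (\<forall>v\<in>set P. separates v A B)))"
  by (simp add: group_separable_def separates_def bipartition_def conj_assoc)

lemma separates_rev: "separates (rev v) A B \<longleftrightarrow> separates v A B"
  unfolding separates_def ranks_above_rev by blast

lemma separates_sym: "separates v B A \<longleftrightarrow> separates v A B"
  unfolding separates_def by blast

lemma group_separableE:
  assumes "group_separable C P" "C' \<subseteq> C" "2 \<le> card C'"
  obtains A B where "bipartition C' A B" "\<forall>v\<in>set P. separates v A B"
  using assms unfolding group_separable_iff by auto

definition agree_on :: "'a set \<Rightarrow> 'a list \<Rightarrow> 'a list \<Rightarrow> bool" where
  "agree_on S v v' \<longleftrightarrow> (\<forall>a\<in>S. \<forall>b\<in>S. ranks_above v a b \<longleftrightarrow> ranks_above v' a b)"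

lemma agree_on_take: "distinct v \<Longrightarrow> agree_on (set (take k v)) v (take k v)"
  using ranks_above_append_left[of "take k v" "drop k v"] by (simp add: agree_on_def)

lemma agree_on_drop: "distinct v \<Longrightarrow> agree_on (set (drop k v)) v (drop k v)"
  using ranks_above_append_right[of "take k v" "drop k v"] by (simp add: agree_on_def)

lemma separates_cong:
  assumes "agree_on S v v'" "A \<subseteq> S" "B \<subseteq> S"
  shows "separates v A B \<longleftrightarrow> separates v' A B"
proof -
  have "ranks_above v a b \<longleftrightarrow> ranks_above v' a b" if "a \<in> A \<union> B" "b \<in> A \<union> B" for a b
    using assms that unfolding agree_on_def by blast
  then show ?thesis unfolding separates_def by (simp cong: ball_cong)
qed

lemma group_separable_restrict:
  assumes "group_separable C P" "S \<subseteq> C" and agree: "\<forall>v'\<in>set P'. \<exists>v\<in>set P. agree_on S v v'"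
  shows "group_separable S P'"
  unfolding group_separable_iff
proof (intro allI impI)
  fix C' assume C': "C' \<subseteq> S \<and> 2 \<le> card C'"
  with assms(1,2) obtain A B where AB: "bipartition C' A B" "\<forall>v\<in>set P. separates v A B"
    by (meson group_separableE order_trans)
  have "A \<subseteq> S" "B \<subseteq> S" using AB(1) C' by (auto simp: bipartition_def)
  have "separates v' A B" if "v' \<in> set P'" for v'
  proof -
    from bspec[OF agree that] obtain v where "v \<in> set P" "agree_on S v v'" ..
    with AB(2) separates_cong[OF _ \<open>A \<subseteq> S\<close> \<open>B \<subseteq> S\<close>] show ?thesis by blast
  qed
  with AB(1) show "\<exists>A B. bipartition C' A B \<and> (\<forall>v\<in>set P'. separates v A B)" by blast
qed

lemma group_separable_subset:
  "group_separable C P \<Longrightarrow> set P' \<subseteq> set P \<Longrightarrow> group_separable C P'"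
  by (rule group_separable_restrict) (auto simp: agree_on_def)

lemma group_separable_rev:
  assumes "group_separable C [u, w]"
  shows "group_separable C [u, rev w]"
  using assms unfolding group_separable_iff by (simp add: separates_rev)

definition gs_partners :: "'a list \<Rightarrow> 'a list set" where
  "gs_partners u = {w. is_vote (set u) w \<and> group_separable (set u) [u, w]}"

definition decomposable_partners :: "'a list \<Rightarrow> 'a list set" where
  "decomposable_partners u =
     {w \<in> gs_partners u. \<exists>k. 0 < k \<and> k < length u \<and> set (take k w) = set (take k u)}"

definition indecomposable_partners :: "'a list \<Rightarrow> 'a list set" where
  "indecomposable_partners u = gs_partners u - decomposable_partners u"

lemma gs_partners_subset_permutations: "gs_partners u \<subseteq> permutations_of_set (set u)"
  by (auto simp: gs_partners_def is_vote_def permutations_of_set_def)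

lemma finite_gs_partners [intro]: "finite (gs_partners u)"
  using gs_partners_subset_permutations finite_subset finite_permutations_of_set by blast

lemma finite_decomposable_partners [intro]: "finite (decomposable_partners u)"
  by (rule finite_subset[OF _ finite_gs_partners]) (auto simp: decomposable_partners_def)

lemma finite_indecomposable_partners [intro]: "finite (indecomposable_partners u)"
  by (rule finite_subset[OF _ finite_gs_partners]) (auto simp: indecomposable_partners_def)

lemma card_gs_partners_le_fact: "distinct u \<Longrightarrow> card (gs_partners u) \<le> fact (length u)"
  using card_mono[OF finite_permutations_of_set gs_partners_subset_permutations[of u]]
  by (simp add: distinct_card)

lemma rev_in_gs_partners: "w \<in> gs_partners u \<Longrightarrow> rev w \<in> gs_partners u"
  by (auto simp: gs_partners_def is_vote_def intro: group_separable_rev)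

lemma gs_partners_take_drop:
  assumes w: "w \<in> gs_partners u" and "distinct u" and k: "set (take k w) = set (take k u)"
  shows "take k w \<in> gs_partners (take k u)" "drop k w \<in> gs_partners (drop k u)"
proof -
  have "distinct w" and "set w = set u" and gs: "group_separable (set u) [u, w]"
    using w by (auto simp: gs_partners_def is_vote_def)
  have drop_eq: "set (drop k v) = set v - set (take k v)" if "distinct v" for v :: "'a list"
  proof -
    have "set v = set (take k v) \<union> set (drop k v)" by (metis append_take_drop_id set_append)
    with set_take_disj_set_drop_if_distinct[OF that order_refl] show ?thesis by blast
  qed
  have k': "set (drop k w) = set (drop k u)"
    using drop_eq[of w] drop_eq[of u] \<open>distinct u\<close> \<open>distinct w\<close> \<open>set w = set u\<close> k by simp
  have "group_separable (set (take k u)) [take k u, take k w]"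
    using agree_on_take[OF \<open>distinct u\<close>, of k] agree_on_take[OF \<open>distinct w\<close>, of k] k
    by (intro group_separable_restrict[OF gs set_take_subset]) auto
  moreover have "group_separable (set (drop k u)) [drop k u, drop k w]"
    using agree_on_drop[OF \<open>distinct u\<close>, of k] agree_on_drop[OF \<open>distinct w\<close>, of k] k'
    by (intro group_separable_restrict[OF gs set_drop_subset]) auto
  ultimately show "take k w \<in> gs_partners (take k u)" "drop k w \<in> gs_partners (drop k u)"
    using \<open>distinct w\<close> k k' by (auto simp: gs_partners_def is_vote_def)
qed

text \<open>The top-level split of the candidates separates \<open>w\<close>, so either \<open>w\<close> or \<open>rev w\<close>
  begins with the same block as \<open>u\<close>.\<close>
lemma rev_indecomposable_partner:
  assumes w: "w \<in> indecomposable_partners u" and du: "distinct u" and len: "2 \<le> length u"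
  shows "rev w \<in> decomposable_partners u"
proof -
  have ws: "w \<in> gs_partners u" and wn: "w \<notin> decomposable_partners u"
    using w by (auto simp: indecomposable_partners_def)
  have dw: "distinct w" and sw: "set w = set u" and gs: "group_separable (set u) [u, w]"
    using ws by (auto simp: gs_partners_def is_vote_def)
  have "2 \<le> card (set u)" using du len by (simp add: distinct_card)
  then obtain A B where AB: "bipartition (set u) A B" "separates u A B" "separates w A B"
    using gs unfolding group_separable_iff by auto
  obtain D1 D2 where D: "bipartition (set u) D1 D2" "separates w D1 D2"
      and u_above: "\<forall>a\<in>D1. \<forall>b\<in>D2. ranks_above u a b"
  proof (cases "\<forall>a\<in>A. \<forall>b\<in>B. ranks_above u a b")
    case True
    then show ?thesis using that AB by blast
  next
    case False
    with AB(2) have "\<forall>a\<in>B. \<forall>b\<in>A. ranks_above u a b" by (auto simp: separates_def)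
    moreover have "bipartition (set u) B A" using AB(1) by (auto simp: bipartition_def)
    ultimately show ?thesis using that[of B A] AB(3) by (simp add: separates_sym)
  qed
  define k where "k = card D1"
  have fin: "finite D1" "finite D2" and disj: "D1 \<inter> D2 = {}" and un: "set u = D1 \<union> D2"
    using D(1) unfolding bipartition_def by (metis finite_Un finite_set)+
  have ku: "set (take k u) = D1"
    unfolding k_def by (rule set_take_card_eq[OF du un disj u_above])
  have "card (set u) = card D1 + card D2" using card_Un_disjoint[OF fin disj] un by simp
  then have k: "0 < k" "k < length u"
    using D(1) du fin by (auto simp: k_def bipartition_def distinct_card card_gt_0_iff)
  show ?thesis
  proof (cases "\<forall>a\<in>D1. \<forall>b\<in>D2. ranks_above w a b")
    case True
    then have "set (take k w) = D1"
      unfolding k_def using set_take_card_eq[OF dw _ disj] sw un by simp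
    then have "w \<in> decomposable_partners u"
      using ws k ku by (auto simp: decomposable_partners_def)
    then show ?thesis using wn by simp
  next
    case False
    then have "\<forall>a\<in>D1. \<forall>b\<in>D2. ranks_above (rev w) a b"
      using D(2) by (auto simp: separates_def ranks_above_rev)
    then have "set (take k (rev w)) = D1"
      unfolding k_def using set_take_card_eq[OF _ _ disj] sw un dw by simp
    then show ?thesis
      using rev_in_gs_partners[OF ws] k ku by (auto simp: decomposable_partners_def)
  qed
qed

lemma card_indecomposable_partners_le:
  assumes "distinct u" "2 \<le> length u"
  shows "card (indecomposable_partners u) \<le> card (decomposable_partners u)"
proof -
  have "indecomposable_partners u \<subseteq> rev ` decomposable_partners u"
    using rev_indecomposable_partner[OF _ assms] by (metis image_eqI rev_rev_ident subsetI)
  then show ?thesis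
    by (metis card_image_le card_mono finite_decomposable_partners finite_imageI le_trans)
qed

text \<open>Splitting at the least common block makes the first factor indecomposable.\<close>
lemma decomposable_partners_subset:
  assumes "distinct u"
  shows "decomposable_partners u \<subseteq>
    (\<Union>k\<in>{1..<length u}. (\<lambda>(x, y). x @ y) `
       (indecomposable_partners (take k u) \<times> gs_partners (drop k u)))"
proof
  fix w assume w: "w \<in> decomposable_partners u"
  let ?P = "\<lambda>k. 0 < k \<and> k < length u \<and> set (take k w) = set (take k u)"
  define k where "k = (LEAST k. ?P k)"
  have ws: "w \<in> gs_partners u" and Pk: "?P k"
    using w LeastI_ex[of ?P] by (auto simp: decomposable_partners_def k_def)
  have "take k w \<notin> decomposable_partners (take k u)"
  proof
    assume "take k w \<in> decomposable_partners (take k u)"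
    then obtain k' where "0 < k'" "k' < length (take k u)"
      "set (take k' (take k w)) = set (take k' (take k u))"
      by (auto simp: decomposable_partners_def)
    then have "k' < k" "?P k'" using Pk by (auto simp: min_def)
    then show False using not_less_Least[of k' ?P] unfolding k_def by blast
  qed
  then have "(take k w, drop k w) \<in> indecomposable_partners (take k u) \<times> gs_partners (drop k u)"
    using gs_partners_take_drop[OF ws assms] Pk by (simp add: indecomposable_partners_def)
  moreover have "k \<in> {1..<length u}" using Pk by auto
  ultimately show "w \<in> (\<Union>k\<in>{1..<length u}. (\<lambda>(x, y). x @ y) `
       (indecomposable_partners (take k u) \<times> gs_partners (drop k u)))"
    by (auto intro!: bexI[of _ k] rev_image_eqI[of "(take k w, drop k w)"])
qed

lemma card_decomposable_partners_le:
  assumes "distinct u"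
  shows "card (decomposable_partners u) \<le>
    (\<Sum>k\<in>{1..<length u}. card (indecomposable_partners (take k u)) * card (gs_partners (drop k u)))"
proof -
  let ?D = "\<lambda>k. indecomposable_partners (take k u) \<times> gs_partners (drop k u)"
  have "card (decomposable_partners u) \<le> card (\<Union>k\<in>{1..<length u}. (\<lambda>(x, y). x @ y) ` ?D k)"
    by (rule card_mono[OF _ decomposable_partners_subset[OF assms]]) auto
  also have "\<dots> \<le> (\<Sum>k\<in>{1..<length u}. card ((\<lambda>(x, y). x @ y) ` ?D k))"
    by (rule card_UN_le) simp
  also have "\<dots> \<le> (\<Sum>k\<in>{1..<length u}. card (?D k))"
    by (intro sum_mono card_image_le) auto
  finally show ?thesis by (simp add: card_cartesian_product)
qed

function little_schroeder :: "nat \<Rightarrow> nat" where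
  "little_schroeder m =
     (if m \<le> 1 then 1
      else (\<Sum>k\<in>{1..<m}. little_schroeder k *
              (if m - k \<le> 1 then 1 else 2 * little_schroeder (m - k))))"
  by auto
termination by (relation "measure id") auto

declare little_schroeder.simps [simp del]

text \<open>\<open>schroeder m\<close> is the large Schroeder number \<open>S\<^sub>m\<^sub>-\<^sub>1\<close>, the number of separable
  permutations of \<open>m\<close> elements, and \<open>little_schroeder m\<close> is the little Schroeder number \<open>s\<^sub>m\<close>.\<close>
definition schroeder :: "nat \<Rightarrow> nat" where
  "schroeder m = (if m \<le> 1 then 1 else 2 * little_schroeder m)"

lemma little_schroeder_1 [simp]: "little_schroeder (Suc 0) = 1"
  by (simp add: little_schroeder.simps)

lemma little_schroeder_rec:
  "2 \<le> m \<Longrightarrow> little_schroeder m = (\<Sum>k\<in>{1..<m}. little_schroeder k * schroeder (m - k))"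
  by (subst little_schroeder.simps) (simp add: schroeder_def)

lemma card_partners_le_schroeder:
  "distinct u \<Longrightarrow> card (indecomposable_partners u) \<le> little_schroeder (length u) \<and>
     card (gs_partners u) \<le> schroeder (length u)"
proof (induction "length u" arbitrary: u rule: less_induct)
  case less
  show ?case
  proof (cases "length u \<le> 1")
    case True
    have "card (gs_partners u) \<le> 1"
      using card_gs_partners_le_fact[OF less.prems] True by (auto simp: le_Suc_eq)
    moreover have "card (indecomposable_partners u) \<le> card (gs_partners u)"
      by (rule card_mono) (auto simp: indecomposable_partners_def)
    ultimately show ?thesis using True by (simp add: schroeder_def little_schroeder.simps)
  next
    case False
    let ?m = "length u"
    have "card (decomposable_partners u) \<le> (\<Sum>k\<in>{1..<?m}.
        card (indecomposable_partners (take k u)) * card (gs_partners (drop k u)))"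
      by (rule card_decomposable_partners_le[OF less.prems])
    also have "\<dots> \<le> (\<Sum>k\<in>{1..<?m}. little_schroeder k * schroeder (?m - k))"
    proof (intro sum_mono mult_le_mono)
      fix k assume k: "k \<in> {1..<?m}"
      show "card (indecomposable_partners (take k u)) \<le> little_schroeder k"
        using less.hyps[of "take k u"] k less.prems by auto
      show "card (gs_partners (drop k u)) \<le> schroeder (?m - k)"
        using less.hyps[of "drop k u"] k less.prems by auto
    qed
    also have "\<dots> = little_schroeder ?m" using False by (simp add: little_schroeder_rec)
    finally have dec: "card (decomposable_partners u) \<le> little_schroeder ?m" .
    then have indec: "card (indecomposable_partners u) \<le> little_schroeder ?m"
      using card_indecomposable_partners_le[OF less.prems] False by simp
    have "gs_partners u = decomposable_partners u \<union> indecomposable_partners u"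
      by (auto simp: decomposable_partners_def indecomposable_partners_def)
    then have "card (gs_partners u) \<le> card (decomposable_partners u) + card (indecomposable_partners u)"
      by (metis card_Un_le)
    then show ?thesis using dec indec False by (simp add: schroeder_def)
  qed
qed

lemma card_gs_elections_le:
  assumes "finite C" "1 \<le> n"
  shows "card {P. is_election C n P \<and> group_separable C P} \<le>
    fact (card C) * schroeder (card C) ^ (n - 1)"
proof -
  let ?V = "permutations_of_set C"
  let ?tails = "\<lambda>u. {L. set L \<subseteq> gs_partners u \<and> length L = n - 1}"
  have "{P. is_election C n P \<and> group_separable C P} \<subseteq> (\<Union>u\<in>?V. (#) u ` ?tails u)"
  proof
    fix P assume "P \<in> {P. is_election C n P \<and> group_separable C P}"
    then have len: "length P = n" and votes: "\<forall>v\<in>set P. is_vote C v"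
      and gs: "group_separable C P" by (auto simp: is_election_def)
    then obtain u L where P: "P = u # L" using assms(2) by (cases P) auto
    have u: "u \<in> ?V" "set u = C"
      using votes P by (auto simp: is_vote_def permutations_of_set_def)
    have "set L \<subseteq> gs_partners u"
      using votes P u(2) group_separable_subset[OF gs] by (auto simp: gs_partners_def)
    moreover have "length L = n - 1" using len P by simp
    ultimately show "P \<in> (\<Union>u\<in>?V. (#) u ` ?tails u)" using P u(1) by blast
  qed
  then have "card {P. is_election C n P \<and> group_separable C P} \<le> card (\<Union>u\<in>?V. (#) u ` ?tails u)"
    using assms(1) by (intro card_mono) (auto intro!: finite_lists_length_eq)
  also have "\<dots> \<le> (\<Sum>u\<in>?V. card ((#) u ` ?tails u))"
    by (rule card_UN_le) (simp add: assms(1))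
  also have "\<dots> \<le> (\<Sum>u\<in>?V. schroeder (card C) ^ (n - 1))"
  proof (rule sum_mono)
    fix u assume u: "u \<in> ?V"
    have "card ((#) u ` ?tails u) \<le> card (?tails u)" by (intro card_image_le finite_lists_length_eq) auto
    also have "\<dots> = card (gs_partners u) ^ (n - 1)" by (intro card_lists_length_eq) auto
    also have "\<dots> \<le> schroeder (card C) ^ (n - 1)"
      using card_partners_le_schroeder[of u] u
      by (intro power_mono) (auto simp: permutations_of_set_def distinct_card)
    finally show "card ((#) u ` ?tails u) \<le> schroeder (card C) ^ (n - 1)" .
  qed
  also have "\<dots> = fact (card C) * schroeder (card C) ^ (n - 1)" using assms(1) by simp
  finally show ?thesis .
qed

definition little_schroeder_sum :: "real \<Rightarrow> nat \<Rightarrow> real" where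
  "little_schroeder_sum x N = (\<Sum>m\<in>{1..N}. real (little_schroeder m) * x ^ m)"

lemma schroeder_sum_eq:
  fixes x :: real
  assumes "1 \<le> N"
  shows "(\<Sum>m\<in>{1..N}. real (schroeder m) * x ^ m) = 2 * little_schroeder_sum x N - x"
  using assms
proof (induction N rule: dec_induct)
  case base
  then show ?case by (simp add: schroeder_def little_schroeder_sum_def)
next
  case (step N)
  then show ?case by (simp add: schroeder_def little_schroeder_sum_def algebra_simps)
qed

lemma sum_convolution_le_product:
  fixes f g :: "nat \<Rightarrow> real"
  assumes "\<And>k. 0 \<le> f k" "\<And>k. 0 \<le> g k"
  shows "(\<Sum>m\<in>{2..Suc N}. \<Sum>k\<in>{1..<m}. f k * g (m - k)) \<le> (\<Sum>k\<in>{1..N}. f k) * (\<Sum>j\<in>{1..N}. g j)"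
proof -
  let ?S = "SIGMA m:{2..Suc N}. {1..<m}"
  have "(\<Sum>m\<in>{2..Suc N}. \<Sum>k\<in>{1..<m}. f k * g (m - k)) = (\<Sum>(m, k)\<in>?S. f k * g (m - k))"
    by (rule sum.Sigma) auto
  also have "\<dots> = (\<Sum>p\<in>(\<lambda>(m, k). (k, m - k)) ` ?S. f (fst p) * g (snd p))"
    by (subst sum.reindex) (auto simp: inj_on_def intro!: sum.cong)
  also have "\<dots> \<le> (\<Sum>p\<in>{1..N} \<times> {1..N}. f (fst p) * g (snd p))"
    by (rule sum_mono2) (auto intro: mult_nonneg_nonneg assms)
  also have "\<dots> = (\<Sum>k\<in>{1..N}. f k) * (\<Sum>j\<in>{1..N}. g j)"
    by (simp add: sum_product sum.cartesian_product case_prod_beta)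
  finally show ?thesis .
qed

lemma little_schroeder_sum_nonneg: "0 \<le> x \<Longrightarrow> 0 \<le> little_schroeder_sum x N"
  unfolding little_schroeder_sum_def by (intro sum_nonneg) simp

text \<open>The generating function \<open>T\<close> of \<open>little_schroeder\<close> satisfies \<open>T = x + T (2 T - x)\<close>;
  truncating it turns this identity into an inequality.\<close>
lemma little_schroeder_sum_Suc_le:
  assumes "0 \<le> x"
  shows "little_schroeder_sum x (Suc N) \<le>
    x + little_schroeder_sum x N * (2 * little_schroeder_sum x N - x)"
proof (cases "N = 0")
  case True
  then show ?thesis by (simp add: little_schroeder_sum_def)
next
  case False
  have "{1..Suc N} = insert 1 {2..Suc N}" by auto
  then have "little_schroeder_sum x (Suc N) = x + (\<Sum>m\<in>{2..Suc N}. real (little_schroeder m) * x ^ m)"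
    by (simp add: little_schroeder_sum_def)
  also have "(\<Sum>m\<in>{2..Suc N}. real (little_schroeder m) * x ^ m) =
      (\<Sum>m\<in>{2..Suc N}. \<Sum>k\<in>{1..<m}.
         (real (little_schroeder k) * x ^ k) * (real (schroeder (m - k)) * x ^ (m - k)))"
  proof (rule sum.cong)
    fix m assume "m \<in> {2..Suc N}"
    then have "real (little_schroeder m) * x ^ m = (\<Sum>k\<in>{1..<m}.
        real (little_schroeder k) * real (schroeder (m - k)) * x ^ (k + (m - k)))"
      by (simp add: little_schroeder_rec sum_distrib_right)
    then show "real (little_schroeder m) * x ^ m = (\<Sum>k\<in>{1..<m}.
         (real (little_schroeder k) * x ^ k) * (real (schroeder (m - k)) * x ^ (m - k)))"
      by (simp only: power_add mult_ac)
  qed simp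
  also have "\<dots> \<le> little_schroeder_sum x N * (\<Sum>j\<in>{1..N}. real (schroeder j) * x ^ j)"
    unfolding little_schroeder_sum_def by (rule sum_convolution_le_product) (simp_all add: assms)
  finally show ?thesis using schroeder_sum_eq[of N x] False by simp
qed

text \<open>\<open>(1 + r) / 4\<close> is the fixed point of \<open>F \<mapsto> r + F (2 F - r)\<close>, a double one since the
  discriminant \<open>r\<^sup>2 - 6 r + 1\<close> vanishes.\<close>
lemma quadratic_step_le:
  fixes r F :: real
  assumes "r\<^sup>2 - 6 * r + 1 = 0" "r < 1" "0 \<le> F" "F \<le> (1 + r) / 4"
  shows "r + F * (2 * F - r) \<le> (1 + r) / 4"
proof -
  have "(1 + r) / 4 - (r + F * (2 * F - r)) =
      2 * (((1 + r) / 4 - F) * (F + (1 - r) / 4)) + (r\<^sup>2 - 6 * r + 1) / 8"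
    by (simp add: field_simps power2_eq_square)
  also have "\<dots> = 2 * (((1 + r) / 4 - F) * (F + (1 - r) / 4))" by (simp add: assms(1))
  also have "\<dots> \<ge> 0" using assms(2-4) by (intro mult_nonneg_nonneg) auto
  finally show ?thesis by simp
qed

definition schroeder_radius :: real where
  "schroeder_radius = 3 - 2 * sqrt 2"

lemma schroeder_radius_pos: "0 < schroeder_radius"
  and schroeder_radius_less_1: "schroeder_radius < 1"
proof -
  have "sqrt 2 < (3 / 2 :: real)" by (rule real_less_lsqrt) (auto simp: power2_eq_square)
  moreover have "(1 :: real) < sqrt 2" by simp
  ultimately show "0 < schroeder_radius" "schroeder_radius < 1"
    unfolding schroeder_radius_def by auto
qed

lemma schroeder_radius_inverse: "schroeder_radius * (3 + 2 * sqrt 2) = 1"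
  by (simp add: schroeder_radius_def algebra_simps)

lemma schroeder_radius_root: "schroeder_radius\<^sup>2 - 6 * schroeder_radius + 1 = 0"
  by (simp add: schroeder_radius_def algebra_simps power2_eq_square)

lemma little_schroeder_sum_le: "little_schroeder_sum schroeder_radius N \<le> (1 + schroeder_radius) / 4"
proof (induction N)
  case 0
  then show ?case using schroeder_radius_pos by (simp add: little_schroeder_sum_def)
next
  case (Suc N)
  let ?r = schroeder_radius and ?F = "little_schroeder_sum schroeder_radius N"
  have "little_schroeder_sum ?r (Suc N) \<le> ?r + ?F * (2 * ?F - ?r)"
    using schroeder_radius_pos by (intro little_schroeder_sum_Suc_le) simp
  also have "\<dots> \<le> (1 + ?r) / 4"
    using Suc.IH schroeder_radius_pos
    by (intro quadratic_step_le schroeder_radius_root schroeder_radius_less_1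
        little_schroeder_sum_nonneg) simp_all
  finally show ?case .
qed

lemma schroeder_le: "real (schroeder m) \<le> (3 + 2 * sqrt 2) ^ m"
proof (cases "m \<le> 1")
  case True
  then show ?thesis by (simp add: schroeder_def)
next
  case False
  let ?r = schroeder_radius
  have "real (little_schroeder m) * ?r ^ m \<le> little_schroeder_sum ?r m"
    unfolding little_schroeder_sum_def using False schroeder_radius_pos
    by (intro member_le_sum) auto
  also have "\<dots> \<le> (1 + ?r) / 4" by (rule little_schroeder_sum_le)
  finally have "real (schroeder m) * ?r ^ m \<le> 1"
    using False schroeder_radius_less_1 by (simp add: schroeder_def)
  then have "real (schroeder m) * ?r ^ m * (3 + 2 * sqrt 2) ^ m \<le> (3 + 2 * sqrt 2) ^ m"
    using mult_right_mono[of _ 1 "(3 + 2 * sqrt 2) ^ m"] by simp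
  then show ?thesis
    by (simp add: mult.assoc schroeder_radius_inverse flip: power_mult_distrib)
qed

theorem mainTheorem6:
  fixes n m :: nat
  assumes "n \<ge> 2" and "m \<ge> 2"
  shows "real (num_gs_elections n m) \<le> fact m * (3 + 2 * sqrt 2) ^ (m * (n - 1))"
proof -
  have count: "num_gs_elections n m \<le> fact m * schroeder m ^ (n - 1)"
    using card_gs_elections_le[of "{1..m}" n] assms by (simp add: num_gs_elections_def)
  have "real (num_gs_elections n m) \<le> fact m * real (schroeder m) ^ (n - 1)"
    using of_nat_mono[OF count] by simp
  also have "\<dots> \<le> fact m * ((3 + 2 * sqrt 2) ^ m) ^ (n - 1)"
    by (intro mult_left_mono power_mono schroeder_le) auto
  also have "\<dots> = fact m * (3 + 2 * sqrt 2) ^ (m * (n - 1))" by (simp add: power_mult)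
  finally show ?thesis .
qed

end
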